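(* Let $\alpha,\beta,\gamma,\Delta\in\mathbb{C}$ with $(\Delta,\beta)\neq(0,0)$. Consider extensions of conformal $\mathrm{HV}$-modules $$0\to V(\alpha,\beta,\Delta)\to E\to\mathbb{C}c_\gamma\to0,$$ realized as $E=\mathbb{C}[\partial]v_\Delta\oplus\mathbb{C}c_\gamma$ with $\mathbb{C}[\partial]v_\Delta\cong V(\alpha,\beta,\Delta)$ a submodule and $L_\lambda c_\gamma=f(\partial,\lambda)v_\Delta$, $N_\lambda c_\gamma=k(\partial,\lambda)v_\Delta$, $\partial c_\gamma=\gamma c_\gamma+a(\partial)v_\Delta$, with $f,k\in\mathbb{C}[\partial,\lambda]$, $a\in\mathbb{C}[\partial]$. Nontrivial extensions of this form exist if and only if $\alpha+\gamma=0$, $\beta=0$ and $\Delta=1$. The unique nontrivial extension is given, up to equivalence, by $k=0$ and $f(\partial,\lambda)=a(\partial)=a_0$ with $a_0\in\mathbb{C}^*$. Furthermore, all trivial extensions correspond to triples $f(\partial,\lambda)=(\alpha+\gamma+\Delta\lambda)\phi(\partial+\lambda)$, $k(\partial,\lambda)=\beta\phi(\partial+\lambda)$, $a(\partial)=(\partial-\gamma)\phi(\partial)$, with $\phi$ a polynomial.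
   Context: A conformal module over a Lie conformal algebra $R$ is a $\mathbb{C}[\partial]$-module $V$ with $a\mapsto a_\lambda\in\mathrm{End}_{\mathbb{C}}(V)\otimes\mathbb{C}[\lambda]$ satisfying $[a_\lambda,b_\mu]=[a_\lambda b]_{\lambda+\mu}$ and $(\partial a)_\lambda=[\partial,a_\lambda]=-\lambda a_\lambda$. The Heisenberg–Virasoro conformal algebra $\mathrm{HV}$ is the free $\mathbb{C}[\partial]$-module with basis $L,N$ and $\lambda$-brackets $[L_\lambda L]=(\partial+2\lambda)L$, $[L_\lambda N]=(\partial+\lambda)N$, $[N_\lambda L]=\lambda N$, $[N_\lambda N]=0$. $V(\alpha,\beta,\Delta)=\mathbb{C}[\partial]v_\Delta$ with $L_\lambda v_\Delta=(\partial+\alpha+\Delta\lambda)v_\Delta$, $N_\lambda v_\Delta=\beta v_\Delta$. $\mathbb{C}c_\gamma$ is the one-dimensional module with $\partial c_\gamma=\gamma c_\gamma$ and zero $\lambda$-actions. An extension of $W$ by $V$ is an exact sequence $0\to V\to E\to W\to0$ of conformal modules; equivalence via a module map of middle terms compatible with identities; trivial means equivalent to the direct sum. *)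

theory Defs
  imports "HOL-Computational_Algebra.Polynomial" "HOL-Library.Product_Plus"
begin

text \<open>D is the action of the derivation (making 'v a C[D]-module);
L l and N l are the lambda-actions of the free generators L, N evaluated at the complex
number l.  The relations are [D, a_l] = - l a_l and [a_l, b_m] = [a_l b]_(l+m) for the
generators, written out using the HV lambda-brackets:
[L_l L]_(l+m) = (l - m) L_(l+m), [L_l N]_(l+m) = - m N_(l+m), [N_l L]_(l+m) = l N_(l+m),
[N_l N] = 0.\<close>

definition conformal_HV_module ::
  "(complex \<Rightarrow> 'v::ab_group_add \<Rightarrow> 'v) \<Rightarrow> ('v \<Rightarrow> 'v) \<Rightarrow> (complex \<Rightarrow> 'v \<Rightarrow> 'v) \<Rightarrow> (complex \<Rightarrow> 'v \<Rightarrow> 'v) \<Rightarrow> bool"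
  where
  "conformal_HV_module sc D L N \<longleftrightarrow>
     (\<forall>c u w. D (u + w) = D u + D w \<and> D (sc c u) = sc c (D u)) \<and>
     (\<forall>l c u w. L l (u + w) = L l u + L l w \<and> L l (sc c u) = sc c (L l u) \<and>
                N l (u + w) = N l u + N l w \<and> N l (sc c u) = sc c (N l u)) \<and>
     (\<forall>l u. L l (D u) = D (L l u) + sc l (L l u)) \<and>
     (\<forall>l u. N l (D u) = D (N l u) + sc l (N l u)) \<and>
     (\<forall>l m u. L l (L m u) - L m (L l u) = sc (l - m) (L (l + m) u)) \<and>
     (\<forall>l m u. L l (N m u) - N m (L l u) = sc (- m) (N (l + m) u)) \<and>
     (\<forall>l m u. N l (L m u) - L m (N l u) = sc l (N (l + m) u)) \<and>
     (\<forall>l m u. N l (N m u) - N m (N l u) = 0)"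

definition HV_hom ::
  "(complex \<Rightarrow> 'v::ab_group_add \<Rightarrow> 'v) \<Rightarrow> ('v \<Rightarrow> 'v) \<Rightarrow> (complex \<Rightarrow> 'v \<Rightarrow> 'v) \<Rightarrow> (complex \<Rightarrow> 'v \<Rightarrow> 'v) \<Rightarrow>
   (complex \<Rightarrow> 'w::ab_group_add \<Rightarrow> 'w) \<Rightarrow> ('w \<Rightarrow> 'w) \<Rightarrow> (complex \<Rightarrow> 'w \<Rightarrow> 'w) \<Rightarrow> (complex \<Rightarrow> 'w \<Rightarrow> 'w) \<Rightarrow>
   ('v \<Rightarrow> 'w) \<Rightarrow> bool"
  where
  "HV_hom sc D L N sc' D' L' N' g \<longleftrightarrow>
     (\<forall>u w. g (u + w) = g u + g w) \<and> (\<forall>c u. g (sc c u) = sc' c (g u)) \<and>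
     (\<forall>u. g (D u) = D' (g u)) \<and>
     (\<forall>l u. g (L l u) = L' l (g u) \<and> g (N l u) = N' l (g u))"

text \<open>An element (p, c) stands
for p(D) v_Delta + c c_gamma.  Bivariate polynomials f(D, l) are of type
complex poly poly: the outer variable is lambda, the coefficients are polynomials in D;
so poly f [:l:] is the polynomial f(D, l) in D.  pcompose p [:l,1:] is p(D + l).\<close>

type_synonym HVE = "complex poly \<times> complex"

definition E_sc :: "complex \<Rightarrow> HVE \<Rightarrow> HVE" where
  "E_sc c w = (smult c (fst w), c * snd w)"

definition E_D :: "complex \<Rightarrow> complex poly \<Rightarrow> HVE \<Rightarrow> HVE" where
  "E_D \<gamma> a w = (pCons 0 (fst w) + smult (snd w) a, \<gamma> * snd w)"

definition E_L :: "complex \<Rightarrow> complex \<Rightarrow> complex poly poly \<Rightarrow> complex \<Rightarrow> HVE \<Rightarrow> HVE" where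
  "E_L \<alpha> \<Delta> f l w =
     (pcompose (fst w) [:l, 1:] * [:\<alpha> + \<Delta> * l, 1:] + smult (snd w) (poly f [:l:]), 0)"

definition E_N :: "complex \<Rightarrow> complex poly poly \<Rightarrow> complex \<Rightarrow> HVE \<Rightarrow> HVE" where
  "E_N \<beta> k l w = (smult \<beta> (pcompose (fst w) [:l, 1:]) + smult (snd w) (poly k [:l:]), 0)"

text \<open>The data (f, k, a) define an extension 0 -> V(alpha,beta,Delta) -> E -> C c_gamma -> 0
iff E is a conformal HV-module (the inclusion p |-> (p,0) and projection (p,c) |-> c are
then automatically module maps).\<close>
definition is_HV_ext ::
  "complex \<Rightarrow> complex \<Rightarrow> complex \<Rightarrow> complex \<Rightarrow> complex poly poly \<Rightarrow> complex poly poly \<Rightarrow> complex poly \<Rightarrow> bool"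
  where
  "is_HV_ext \<alpha> \<beta> \<gamma> \<Delta> f k a \<longleftrightarrow> conformal_HV_module E_sc (E_D \<gamma> a) (E_L \<alpha> \<Delta> f) (E_N \<beta> k)"

definition HV_ext_equiv ::
  "complex \<Rightarrow> complex \<Rightarrow> complex \<Rightarrow> complex \<Rightarrow>
   complex poly poly \<Rightarrow> complex poly poly \<Rightarrow> complex poly \<Rightarrow>
   complex poly poly \<Rightarrow> complex poly poly \<Rightarrow> complex poly \<Rightarrow> bool"
  where
  "HV_ext_equiv \<alpha> \<beta> \<gamma> \<Delta> f k a f' k' a' \<longleftrightarrow>
     (\<exists>g. HV_hom E_sc (E_D \<gamma> a) (E_L \<alpha> \<Delta> f) (E_N \<beta> k)
                E_sc (E_D \<gamma> a') (E_L \<alpha> \<Delta> f') (E_N \<beta> k') g \<and>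
          (\<forall>p. g (p, 0) = (p, 0)) \<and> (\<forall>w. snd (g w) = snd w))"

text \<open>Trivial = equivalent to the direct sum V(alpha,beta,Delta) (+) C c_gamma,
which is the extension with f = 0, k = 0, a = 0.\<close>
definition trivial_HV_ext ::
  "complex \<Rightarrow> complex \<Rightarrow> complex \<Rightarrow> complex \<Rightarrow> complex poly poly \<Rightarrow> complex poly poly \<Rightarrow> complex poly \<Rightarrow> bool"
  where
  "trivial_HV_ext \<alpha> \<beta> \<gamma> \<Delta> f k a \<longleftrightarrow> HV_ext_equiv \<alpha> \<beta> \<gamma> \<Delta> f k a 0 0 0"

end

theory Submission
  imports Defs
begin

text \<open>Evaluating the module axioms of E on c_gamma turns them into functional equations
for (f, k, a).  The commutation of L_l with D reads
(D + l - gamma) f(D, l) = a(D + l) (D + alpha + Delta l), and likewise for k.  Divide a by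
D - gamma: a = a(gamma) + (D - gamma) phi.  Setting D = gamma - l shows
a(gamma) (alpha + gamma + (Delta - 1) l) = 0 and beta a(gamma) = 0, and cancelling the factor
D + l - gamma then determines f and k: the triple (f, k, a) is the constant triple
(a(gamma), 0, a(gamma)) plus the coboundary of phi.  Since changing the splitting by
c_gamma |-> c_gamma + phi(D) v_Delta alters the triple exactly by the coboundary of phi,
the extension is trivial iff a(gamma) = 0, and a(gamma) can be nonzero only if
alpha + gamma = 0, beta = 0 and Delta = 1.\<close>

lemma poly_eq_iff_eval:
  fixes p q :: "'a::{comm_ring_1,ring_no_zero_divisors,ring_char_0} poly"
  shows "p = q \<longleftrightarrow> (\<forall>x. poly p x = poly q x)"
  by (simp flip: poly_eq_poly_eq_iff add: fun_eq_iff)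

lemma HVE_eq_iff: "w = w' \<longleftrightarrow> snd w = snd w' \<and> (\<forall>x. poly (fst w) x = poly (fst w') x)"
  for w w' :: HVE
  by (simp add: prod_eq_iff poly_eq_iff_eval conj_commute)

lemma HVE_eval:
  "snd (E_sc c w) = c * snd w"
  "poly (fst (E_sc c w)) x = c * poly (fst w) x"
  "snd (E_D \<gamma> a w) = \<gamma> * snd w"
  "poly (fst (E_D \<gamma> a w)) x = x * poly (fst w) x + snd w * poly a x"
  "snd (E_L \<alpha> \<Delta> f l w) = 0"
  "poly (fst (E_L \<alpha> \<Delta> f l w)) x = poly (fst w) (x + l) * (x + \<alpha> + \<Delta> * l) + snd w * poly (poly f [:l:]) x"
  "snd (E_N \<beta> k l w) = 0"
  "poly (fst (E_N \<beta> k l w)) x = \<beta> * poly (fst w) (x + l) + snd w * poly (poly k [:l:]) x"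
  by (simp_all add: E_sc_def E_D_def E_L_def E_N_def poly_pcompose algebra_simps)

text \<open>The module axioms of E evaluated on c_gamma, with x for D: in order those for
[D, L_l], [D, N_l], [L_l, L_m], [L_l, N_m] and [N_l, N_m].  The one for [N_l, L_m] is that
for [L_m, N_l] with l and m exchanged.\<close>

definition HV_cocycle ::
  "complex \<Rightarrow> complex \<Rightarrow> complex \<Rightarrow> complex \<Rightarrow> complex poly poly \<Rightarrow> complex poly poly \<Rightarrow> complex poly \<Rightarrow> bool"
  where
  "HV_cocycle \<alpha> \<beta> \<gamma> \<Delta> f k a \<longleftrightarrow>
     (\<forall>l x. (x + l - \<gamma>) * poly (poly f [:l:]) x = poly a (x + l) * (x + \<alpha> + \<Delta> * l)) \<and>
     (\<forall>l x. (x + l - \<gamma>) * poly (poly k [:l:]) x = \<beta> * poly a (x + l)) \<and>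
     (\<forall>l m x. poly (poly f [:m:]) (x + l) * (x + \<alpha> + \<Delta> * l)
                - poly (poly f [:l:]) (x + m) * (x + \<alpha> + \<Delta> * m) = (l - m) * poly (poly f [:l + m:]) x) \<and>
     (\<forall>l m x. poly (poly k [:m:]) (x + l) * (x + \<alpha> + \<Delta> * l)
                - \<beta> * poly (poly f [:l:]) (x + m) = - m * poly (poly k [:l + m:]) x) \<and>
     (\<forall>l m x. \<beta> * poly (poly k [:m:]) (x + l) = \<beta> * poly (poly k [:l:]) (x + m))"

lemma is_HV_ext_imp_cocycle:
  assumes "is_HV_ext \<alpha> \<beta> \<gamma> \<Delta> f k a"
  shows "HV_cocycle \<alpha> \<beta> \<gamma> \<Delta> f k a"
proof -
  let ?c = "(0, 1) :: HVE" and ?D = "E_D \<gamma> a" and ?L = "E_L \<alpha> \<Delta> f" and ?N = "E_N \<beta> k"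
  have "\<forall>l. ?L l (?D ?c) = ?D (?L l ?c) + E_sc l (?L l ?c)"
    "\<forall>l. ?N l (?D ?c) = ?D (?N l ?c) + E_sc l (?N l ?c)"
    "\<forall>l m. ?L l (?L m ?c) - ?L m (?L l ?c) = E_sc (l - m) (?L (l + m) ?c)"
    "\<forall>l m. ?L l (?N m ?c) - ?N m (?L l ?c) = E_sc (- m) (?N (l + m) ?c)"
    "\<forall>l m. ?N l (?N m ?c) - ?N m (?N l ?c) = 0"
    using assms unfolding is_HV_ext_def conformal_HV_module_def by blast+
  then show ?thesis
    unfolding HV_cocycle_def by (simp add: HVE_eq_iff HVE_eval algebra_simps)
qed

lemma is_HV_ext_if_cocycle:
  assumes "HV_cocycle \<alpha> \<beta> \<gamma> \<Delta> f k a"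
  shows "is_HV_ext \<alpha> \<beta> \<gamma> \<Delta> f k a"
proof -
  from assms have
    DL: "\<And>l x. (x + l - \<gamma>) * poly (poly f [:l:]) x = poly a (x + l) * (x + \<alpha> + \<Delta> * l)" and
    DN: "\<And>l x. (x + l - \<gamma>) * poly (poly k [:l:]) x = \<beta> * poly a (x + l)" and
    LL: "\<And>l m x. poly (poly f [:m:]) (x + l) * (x + \<alpha> + \<Delta> * l)
                - poly (poly f [:l:]) (x + m) * (x + \<alpha> + \<Delta> * m) = (l - m) * poly (poly f [:l + m:]) x" and
    LN: "\<And>l m x. poly (poly k [:m:]) (x + l) * (x + \<alpha> + \<Delta> * l)
                - \<beta> * poly (poly f [:l:]) (x + m) = - m * poly (poly k [:l + m:]) x" and
    NN: "\<And>l m x. \<beta> * poly (poly k [:m:]) (x + l) = \<beta> * poly (poly k [:l:]) (x + m)"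
    unfolding HV_cocycle_def by blast+
  show ?thesis
    unfolding is_HV_ext_def conformal_HV_module_def
    apply (simp add: HVE_eq_iff HVE_eval algebra_simps)
    apply (intro conjI allI)
    subgoal for l c x using DL[where l=l and x=x] by (simp add: add.commute) algebra
    subgoal for l c x using DN[where l=l and x=x] by (simp add: add.commute) algebra
    subgoal for l m c x using LL[where l=l and m=m and x=x] by (simp add: add.commute) algebra
    subgoal for l m c x using LN[where l=l and m=m and x=x] by (simp add: add.commute) algebra
    subgoal for l m c x using LN[where l=m and m=l and x=x] by (simp add: add.commute) algebra
    using NN by (metis add.commute mult_cancel_left)
qed

lemma HV_cocycleD:
  assumes "HV_cocycle \<alpha> \<beta> \<gamma> \<Delta> f k a"
  shows "(x + l - \<gamma>) * poly (poly f [:l:]) x = poly a (x + l) * (x + \<alpha> + \<Delta> * l)"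
    and "(x + l - \<gamma>) * poly (poly k [:l:]) x = \<beta> * poly a (x + l)"
  using assms unfolding HV_cocycle_def by blast+

lemma poly_eqI_linear_factor:
  fixes p q :: "'a::{idom,ring_char_0} poly"
  assumes "\<And>x. (x - c) * poly p x = (x - c) * poly q x"
  shows "p = q"
proof -
  have "[:- c, 1:] * p = [:- c, 1:] * q"
    using assms by (simp add: poly_eq_iff_eval algebra_simps)
  moreover have "[:- c, 1:] \<noteq> 0" by simp
  ultimately show ?thesis by (rule mult_left_cancel[THEN iffD1, rotated])
qed

lemma HV_cocycle_obstruction:
  assumes "HV_cocycle \<alpha> \<beta> \<gamma> \<Delta> f k a" and "poly a \<gamma> \<noteq> 0"
  shows "\<alpha> + \<gamma> = 0 \<and> \<beta> = 0 \<and> \<Delta> = 1"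
proof -
  have Z: "poly a \<gamma> * (\<alpha> + \<gamma> + (\<Delta> - 1) * l) = 0" for l
    using HV_cocycleD(1)[OF assms(1), where l = l and x = "\<gamma> - l"] by (simp add: algebra_simps)
  have "\<beta> * poly a \<gamma> = 0"
    using HV_cocycleD(2)[OF assms(1), where l = 0 and x = \<gamma>] by simp
  with Z[of 0] Z[of 1] assms(2) show ?thesis by auto
qed

lemma HV_ext_equiv_iff:
  "HV_ext_equiv \<alpha> \<beta> \<gamma> \<Delta> f k a f' k' a' \<longleftrightarrow>
   (\<exists>\<phi>. (\<forall>l. poly f [:l:] = poly f' [:l:] + [:\<alpha> + \<Delta> * l, 1:] * pcompose \<phi> [:l, 1:]) \<and>
         (\<forall>l. poly k [:l:] = poly k' [:l:] + smult \<beta> (pcompose \<phi> [:l, 1:])) \<and>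
         a = a' + [:- \<gamma>, 1:] * \<phi>)"
  (is "_ \<longleftrightarrow> (\<exists>\<phi>. ?coboundary \<phi>)")
proof
  assume "HV_ext_equiv \<alpha> \<beta> \<gamma> \<Delta> f k a f' k' a'"
  then obtain g where
    hom: "HV_hom E_sc (E_D \<gamma> a) (E_L \<alpha> \<Delta> f) (E_N \<beta> k) E_sc (E_D \<gamma> a') (E_L \<alpha> \<Delta> f') (E_N \<beta> k') g"
    and g_V: "\<And>p. g (p, 0) = (p, 0)" and g_snd: "\<And>w. snd (g w) = snd w"
    unfolding HV_ext_equiv_def by blast
  define \<phi> where "\<phi> = fst (g (0, 1))"
  have g_c: "g (0, 1) = (\<phi>, 1)"
    using g_snd[of "(0, 1)"] unfolding \<phi>_def by (metis prod.collapse snd_conv)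
  have g_D: "g (E_D \<gamma> a (0, 1)) = E_D \<gamma> a' (g (0, 1))"
    and g_L: "g (E_L \<alpha> \<Delta> f l (0, 1)) = E_L \<alpha> \<Delta> f' l (g (0, 1))"
    and g_N: "g (E_N \<beta> k l (0, 1)) = E_N \<beta> k' l (g (0, 1))" for l
    using hom unfolding HV_hom_def by blast+
  have g_pc: "g (p, c) = (p + smult c \<phi>, c)" for p c
  proof -
    have "(p, c) = (p, 0) + E_sc c (0, 1)" by (simp add: E_sc_def)
    then have "g (p, c) = g (p, 0) + E_sc c (g (0, 1))"
      using hom unfolding HV_hom_def by metis
    then show ?thesis using g_V g_c by (simp add: E_sc_def)
  qed
  have "?coboundary \<phi>"
    using g_D g_L g_N
    by (simp add: g_pc g_c E_D_def E_L_def E_N_def poly_eq_iff_eval poly_pcompose algebra_simps)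
  then show "\<exists>\<phi>. ?coboundary \<phi>" ..
next
  assume "\<exists>\<phi>. ?coboundary \<phi>"
  then obtain \<phi> where coboundary:
    "\<forall>l. poly f [:l:] = poly f' [:l:] + [:\<alpha> + \<Delta> * l, 1:] * pcompose \<phi> [:l, 1:]"
    "\<forall>l. poly k [:l:] = poly k' [:l:] + smult \<beta> (pcompose \<phi> [:l, 1:])"
    "a = a' + [:- \<gamma>, 1:] * \<phi>" by blast
  show "HV_ext_equiv \<alpha> \<beta> \<gamma> \<Delta> f k a f' k' a'"
    unfolding HV_ext_equiv_def HV_hom_def
    by (intro exI[of _ "\<lambda>w. (fst w + smult (snd w) \<phi>, snd w)"])
      (simp add: coboundary prod_eq_iff poly_eq_iff_eval E_sc_def E_D_def E_L_def E_N_def poly_pcompose algebra_simps)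
qed

lemma trivial_HV_ext_iff:
  "trivial_HV_ext \<alpha> \<beta> \<gamma> \<Delta> f k a \<longleftrightarrow>
   (\<exists>\<phi>. (\<forall>l. poly f [:l:] = [:\<alpha> + \<Delta> * l, 1:] * pcompose \<phi> [:l, 1:]) \<and>
         (\<forall>l. poly k [:l:] = smult \<beta> (pcompose \<phi> [:l, 1:])) \<and>
         a = [:- \<gamma>, 1:] * \<phi>)"
  unfolding trivial_HV_ext_def HV_ext_equiv_iff by simp

lemma is_HV_ext_if_normal_form:
  assumes f: "\<And>l. poly f [:l:] = [:c:] + [:\<alpha> + \<Delta> * l, 1:] * pcompose \<phi> [:l, 1:]"
    and k: "\<And>l. poly k [:l:] = smult \<beta> (pcompose \<phi> [:l, 1:])"
    and a: "a = [:c:] + [:- \<gamma>, 1:] * \<phi>"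
    and obstruction: "c \<noteq> 0 \<Longrightarrow> \<alpha> + \<gamma> = 0 \<and> \<beta> = 0 \<and> \<Delta> = 1"
  shows "is_HV_ext \<alpha> \<beta> \<gamma> \<Delta> f k a"
proof (rule is_HV_ext_if_cocycle)
  show "HV_cocycle \<alpha> \<beta> \<gamma> \<Delta> f k a"
  proof (cases "c = 0")
    case True
    then show ?thesis
      unfolding HV_cocycle_def by (simp add: f k a poly_pcompose algebra_simps)
  next
    case False
    with obstruction have "\<alpha> = - \<gamma>" "\<beta> = 0" "\<Delta> = 1"
      by (simp_all add: eq_neg_iff_add_eq_0)
    then show ?thesis
      unfolding HV_cocycle_def by (simp add: f k a poly_pcompose algebra_simps)
  qed
qed

lemma is_HV_ext_equiv_normal_form:
  assumes "is_HV_ext \<alpha> \<beta> \<gamma> \<Delta> f k a"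
  shows "HV_ext_equiv \<alpha> \<beta> \<gamma> \<Delta> f k a [:[:poly a \<gamma>:]:] 0 [:poly a \<gamma>:]"
proof -
  define c where "c = poly a \<gamma>"
  define \<phi> where "\<phi> = synthetic_div a \<gamma>"
  have a: "a = [:c:] + [:- \<gamma>, 1:] * \<phi>"
    using synthetic_div_correct'[of \<gamma> a] by (simp add: c_def \<phi>_def add.commute)
  have cocycle: "HV_cocycle \<alpha> \<beta> \<gamma> \<Delta> f k a"
    using assms by (rule is_HV_ext_imp_cocycle)
  have "c \<noteq> 0 \<Longrightarrow> \<alpha> + \<gamma> = 0 \<and> \<beta> = 0 \<and> \<Delta> = 1"
    using HV_cocycle_obstruction[OF cocycle] by (simp add: c_def)
  then have f_defect: "c * (\<alpha> + \<gamma> + (\<Delta> - 1) * l) = 0" and k_defect: "\<beta> * c = 0" for l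
    by (cases "c = 0"; simp)+
  have "poly f [:l:] = [:c:] + [:\<alpha> + \<Delta> * l, 1:] * pcompose \<phi> [:l, 1:]" for l
  proof (rule poly_eqI_linear_factor[where c = "\<gamma> - l"])
    fix x
    show "(x - (\<gamma> - l)) * poly (poly f [:l:]) x =
          (x - (\<gamma> - l)) * poly ([:c:] + [:\<alpha> + \<Delta> * l, 1:] * pcompose \<phi> [:l, 1:]) x"
      using HV_cocycleD(1)[OF cocycle, where l = l and x = x] f_defect[of l]
      by (subst (asm) a) (simp add: poly_pcompose algebra_simps)
  qed
  moreover have "poly k [:l:] = smult \<beta> (pcompose \<phi> [:l, 1:])" for l
  proof (rule poly_eqI_linear_factor[where c = "\<gamma> - l"])
    fix x
    show "(x - (\<gamma> - l)) * poly (poly k [:l:]) x =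
          (x - (\<gamma> - l)) * poly (smult \<beta> (pcompose \<phi> [:l, 1:])) x"
      using HV_cocycleD(2)[OF cocycle, where l = l and x = x] k_defect
      by (subst (asm) a) (simp add: poly_pcompose algebra_simps)
  qed
  ultimately show ?thesis
    unfolding HV_ext_equiv_iff c_def[symmetric] using a by auto
qed

lemma trivial_HV_ext_iff_root:
  assumes "is_HV_ext \<alpha> \<beta> \<gamma> \<Delta> f k a"
  shows "trivial_HV_ext \<alpha> \<beta> \<gamma> \<Delta> f k a \<longleftrightarrow> poly a \<gamma> = 0"
proof
  assume "trivial_HV_ext \<alpha> \<beta> \<gamma> \<Delta> f k a"
  then obtain \<phi> where "a = [:- \<gamma>, 1:] * \<phi>"
    unfolding trivial_HV_ext_iff by blast
  then show "poly a \<gamma> = 0" by simp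
next
  assume "poly a \<gamma> = 0"
  then show "trivial_HV_ext \<alpha> \<beta> \<gamma> \<Delta> f k a"
    using is_HV_ext_equiv_normal_form[OF assms] by (simp add: trivial_HV_ext_def)
qed

lemma is_HV_ext_if_trivial:
  assumes "trivial_HV_ext \<alpha> \<beta> \<gamma> \<Delta> f k a"
  shows "is_HV_ext \<alpha> \<beta> \<gamma> \<Delta> f k a"
  using assms is_HV_ext_if_normal_form[where c = 0] unfolding trivial_HV_ext_iff by auto

lemma nontrivial_HV_ext:
  assumes "\<alpha> + \<gamma> = 0" "\<beta> = 0" "\<Delta> = 1" "a0 \<noteq> 0"
  shows "is_HV_ext \<alpha> \<beta> \<gamma> \<Delta> [:[:a0:]:] 0 [:a0:] \<and> \<not> trivial_HV_ext \<alpha> \<beta> \<gamma> \<Delta> [:[:a0:]:] 0 [:a0:]"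
proof
  show ext: "is_HV_ext \<alpha> \<beta> \<gamma> \<Delta> [:[:a0:]:] 0 [:a0:]"
    by (rule is_HV_ext_if_normal_form[where c = a0 and \<phi> = 0]) (simp_all add: assms)
  show "\<not> trivial_HV_ext \<alpha> \<beta> \<gamma> \<Delta> [:[:a0:]:] 0 [:a0:]"
    using assms(4) by (simp add: trivial_HV_ext_iff_root[OF ext])
qed

theorem corollary6p2:
  fixes \<alpha> \<beta> \<gamma> \<Delta> :: complex
  assumes "(\<Delta>, \<beta>) \<noteq> (0, 0)"
  shows
    "((\<exists>f k a. is_HV_ext \<alpha> \<beta> \<gamma> \<Delta> f k a \<and> \<not> trivial_HV_ext \<alpha> \<beta> \<gamma> \<Delta> f k a)
        \<longleftrightarrow> (\<alpha> + \<gamma> = 0 \<and> \<beta> = 0 \<and> \<Delta> = 1))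
   \<and> (\<alpha> + \<gamma> = 0 \<and> \<beta> = 0 \<and> \<Delta> = 1 \<longrightarrow>
        (\<forall>a0. a0 \<noteq> 0 \<longrightarrow>
            is_HV_ext \<alpha> \<beta> \<gamma> \<Delta> [:[:a0:]:] 0 [:a0:] \<and>
            \<not> trivial_HV_ext \<alpha> \<beta> \<gamma> \<Delta> [:[:a0:]:] 0 [:a0:]) \<and>
        (\<forall>f k a. is_HV_ext \<alpha> \<beta> \<gamma> \<Delta> f k a \<and> \<not> trivial_HV_ext \<alpha> \<beta> \<gamma> \<Delta> f k a \<longrightarrow>
            (\<exists>a0. a0 \<noteq> 0 \<and> HV_ext_equiv \<alpha> \<beta> \<gamma> \<Delta> f k a [:[:a0:]:] 0 [:a0:])))
   \<and> (\<forall>f k a. (is_HV_ext \<alpha> \<beta> \<gamma> \<Delta> f k a \<and> trivial_HV_ext \<alpha> \<beta> \<gamma> \<Delta> f k a) \<longleftrightarrow>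
        (\<exists>\<phi>. (\<forall>l. poly f [:l:] = [:\<alpha> + \<Delta> * l, 1:] * pcompose \<phi> [:l, 1:]) \<and>
              (\<forall>l. poly k [:l:] = smult \<beta> (pcompose \<phi> [:l, 1:])) \<and>
              a = [:- \<gamma>, 1:] * \<phi>))"
proof -
  have nontrivial_classification:
    "(\<alpha> + \<gamma> = 0 \<and> \<beta> = 0 \<and> \<Delta> = 1) \<and>
     (\<exists>a0. a0 \<noteq> 0 \<and> HV_ext_equiv \<alpha> \<beta> \<gamma> \<Delta> f k a [:[:a0:]:] 0 [:a0:])"
    if "is_HV_ext \<alpha> \<beta> \<gamma> \<Delta> f k a" and "\<not> trivial_HV_ext \<alpha> \<beta> \<gamma> \<Delta> f k a" for f k a
  proof -
    have root: "poly a \<gamma> \<noteq> 0"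
      using that trivial_HV_ext_iff_root by blast
    show ?thesis
      using HV_cocycle_obstruction[OF is_HV_ext_imp_cocycle[OF that(1)] root]
        is_HV_ext_equiv_normal_form[OF that(1)] root by blast
  qed
  show ?thesis
    apply (intro conjI)
    subgoal using nontrivial_classification nontrivial_HV_ext[of \<alpha> \<gamma> \<beta> \<Delta> 1] by auto
    subgoal using nontrivial_classification nontrivial_HV_ext by blast
    subgoal using is_HV_ext_if_trivial trivial_HV_ext_iff by blast
    done
qed

end
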